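(* Let $d\ge2$ and let $R=(r_{ij})$ be a real $d\times d$ matrix with $r_{ii}=1$ for all $i$. Assume $R$ is not an $\mathcal S$-matrix, every principal sub-matrix of $R$ other than $R$ itself is completely-$\mathcal S$, and $\det R=0$. Then $R$ has rank $d-1$, there exists a column vector $U>0$ with $RU=0$, and there exists a row vector $a>0$ with $aR=0$.
   Context: $x>0$ (resp. $x\ge0$) means all entries positive (resp. non-negative). A square matrix $M$ is an $\mathcal S$-matrix if there exists a vector $x\ge0$ with $Mx>0$; it is completely-$\mathcal S$ if all its principal sub-matrices (sub-matrices $(m_{ij})_{i,j\in I}$ for non-empty index sets $I$, including the full set) are $\mathcal S$-matrices. *)

theory Defs
  imports "HOL-Analysis.Analysis"
begin

definition pos_vec :: "real ^ 'n \<Rightarrow> bool" where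
  "pos_vec x \<longleftrightarrow> (\<forall>i. x $ i > 0)"

definition nonneg_vec :: "real ^ 'n \<Rightarrow> bool" where
  "nonneg_vec x \<longleftrightarrow> (\<forall>i. x $ i \<ge> 0)"

definition S_matrix :: "real ^ 'n ^ 'n \<Rightarrow> bool" where
  "S_matrix M \<longleftrightarrow> (\<exists>x. nonneg_vec x \<and> pos_vec (M *v x))"

definition principal_S :: "real ^ 'n ^ 'n \<Rightarrow> 'n set \<Rightarrow> bool" where
  "principal_S M I \<longleftrightarrow>
     (\<exists>x :: 'n \<Rightarrow> real. (\<forall>j\<in>I. x j \<ge> 0) \<and> (\<forall>i\<in>I. (\<Sum>j\<in>I. M $ i $ j * x j) > 0))"

definition completely_S_on :: "real ^ 'n ^ 'n \<Rightarrow> 'n set \<Rightarrow> bool" where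
  "completely_S_on M J \<longleftrightarrow> (\<forall>I. I \<noteq> {} \<and> I \<subseteq> J \<longrightarrow> principal_S M I)"

end

theory Submission
  imports Defs
begin

text \<open>
  Since \<open>R\<close> is not an S-matrix, Ville's theorem of the alternative gives \<open>y \<ge> 0\<close>, \<open>y \<noteq> 0\<close>
  with \<open>y R \<le> 0\<close>. Such a \<open>y\<close> has no zero entry: otherwise its support indexes a proper
  principal sub-matrix, and pairing \<open>y\<close> with the vector witnessing the S-property of that
  sub-matrix gives \<open>0 < 0\<close>. Hence \<open>y > 0\<close>. If \<open>w R \<ge> 0\<close> and \<open>w\<close> has a positive entry,
  subtracting from \<open>y\<close> the largest multiple \<open>t w\<close> that keeps \<open>y - t w \<ge> 0\<close> produces a
  vector of the same kind with a zero entry, so \<open>y = t w\<close>. Applied to the left null space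
  (non-trivial as \<open>det R = 0\<close>) this shows that it is spanned by \<open>y\<close>, so \<open>y R = 0\<close> and
  \<open>rank R = d - 1\<close>; applied to the vector given by Stiemke's theorem of the alternative
  it yields \<open>U > 0\<close> with \<open>R U = 0\<close>.
\<close>

lemma le_if_le_plus_multiples:
  fixes a b c :: real
  assumes "\<And>e. e > 0 \<Longrightarrow> c \<le> a + e * b"
  shows "c \<le> a"
proof (cases "b > 0")
  case True
  show ?thesis
  proof (rule field_le_epsilon)
    fix e :: real assume "e > 0"
    then show "c \<le> a + e" using assms[of "e / b"] True by simp
  qed
next
  case False
  then show ?thesis using assms[of 1] by simp
qed

lemma inner_const_vec: "inner w (\<chi> j. e) = e * (\<Sum>j\<in>UNIV. (w :: real ^ 'n) $ j)"
  by (simp add: inner_vec_def sum_distrib_left mult.commute)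

lemma inner_lower_bound_nonneg_orthant:
  fixes w x :: "real ^ 'n"
  assumes bound: "\<And>q. pos_vec q \<Longrightarrow> c \<le> inner w q" and "0 \<le> x"
  shows "c \<le> inner w x"
proof (rule le_if_le_plus_multiples)
  fix e :: real assume "e > 0"
  then have "pos_vec (x + (\<chi> j. e))"
    using \<open>0 \<le> x\<close> by (auto simp: pos_vec_def less_eq_vec_def add_nonneg_pos)
  then have "c \<le> inner w (x + (\<chi> j. e))" by (rule bound)
  then show "c \<le> inner w x + e * (\<Sum>j\<in>UNIV. w $ j)"
    by (simp add: inner_add_right inner_const_vec)
qed

lemma convex_nonneg_orthant: "convex {x :: real ^ 'n. 0 \<le> x}"
  unfolding convex_def less_eq_vec_def by (auto intro!: add_nonneg_nonneg mult_nonneg_nonneg)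

lemma convex_pos_orthant: "convex {x :: real ^ 'n. pos_vec x}"
proof (rule convexI)
  fix x y :: "real ^ 'n" and u v :: real
  assume "x \<in> {x. pos_vec x}" "y \<in> {x. pos_vec x}" "0 \<le> u" "0 \<le> v" "u + v = 1"
  then have "u * x $ i + v * y $ i > 0" for i
    by (cases "u = 0")
      (auto simp: pos_vec_def intro!: add_pos_nonneg mult_pos_pos mult_nonneg_nonneg intro: less_imp_le)
  then show "u *\<^sub>R x + v *\<^sub>R y \<in> {x. pos_vec x}"
    by (simp add: pos_vec_def)
qed

lemma axis_nonneg: "0 \<le> axis i (1 :: real)"
  by (simp add: less_eq_vec_def axis_def)

lemma uminus_vector_matrix_mult: "(- x) v* A = - (x v* (A :: real ^ 'm ^ 'n))"
  using scaleR_vector_matrix_assoc[of "-1" x A] by simp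

lemma ville_alternative:
  fixes A :: "real ^ 'n ^ 'm"
  assumes "\<nexists>x. 0 \<le> x \<and> pos_vec (A *v x)"
  shows "\<exists>y. y \<noteq> 0 \<and> 0 \<le> y \<and> y v* A \<le> 0"
proof -
  define S where "S = (\<Union>a\<in>(*v) A ` {x. 0 \<le> x}. \<Union>q\<in>{q. pos_vec q}. {a - q})"
  have mem: "A *v x - q \<in> S" if "0 \<le> x" "pos_vec q" for x q
    using that unfolding S_def by blast
  have "convex S"
    unfolding S_def
    by (intro convex_differences convex_linear_image convex_nonneg_orthant convex_pos_orthant) simp
  moreover have "0 \<notin> S"
  proof
    assume "0 \<in> S"
    then obtain x q where "0 \<le> x" "pos_vec q" "0 = A *v x - q"
      unfolding S_def by blast
    then show False using assms by (metis right_minus_eq)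
  qed
  ultimately obtain z where "z \<noteq> 0" and z: "\<forall>s\<in>S. 0 \<le> inner z s"
    using separating_hyperplane_set_0 by blast
  have bound: "- inner (z v* A) x \<le> inner (- z) q" if "0 \<le> x" "pos_vec q" for x q
    using z[rule_format, OF mem[OF that]] by (simp add: inner_diff_right dot_lmul_matrix)
  have sep: "- inner (z v* A) x \<le> inner (- z) q" if "0 \<le> x" "0 \<le> q" for x q
    using inner_lower_bound_nonneg_orthant[OF bound[OF that(1)] that(2)] .
  have "0 \<le> (- z) $ i" for i
    using sep[OF order.refl axis_nonneg, of i] by (simp add: inner_axis)
  moreover have "((- z) v* A) $ j \<le> 0" for j
    using sep[OF axis_nonneg order.refl, of j] by (simp add: inner_axis uminus_vector_matrix_mult)
  ultimately have "0 \<le> - z" "(- z) v* A \<le> 0"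
    by (simp_all add: less_eq_vec_def)
  then show ?thesis
    using \<open>z \<noteq> 0\<close> by (intro exI[of _ "- z"]) simp
qed

lemma left_null_add_range_eq_0:
  fixes A :: "real ^ 'n ^ 'm"
  assumes "n v* A = 0" and "A *v x + n = 0"
  shows "n = 0"
proof -
  have "inner n n = inner n (A *v x + n)"
    using \<open>n v* A = 0\<close> by (simp add: inner_add_right flip: dot_lmul_matrix)
  then show ?thesis
    using \<open>A *v x + n = 0\<close> by simp
qed

lemma stiemke_alternative:
  fixes A :: "real ^ 'n ^ 'm"
  assumes "\<nexists>x. pos_vec x \<and> A *v x = 0"
  shows "\<exists>z. 0 \<le> z v* A \<and> z v* A \<noteq> 0"
proof -
  \<comment> \<open>Adding the left null space \<open>N\<close> to the cone forces the separating \<open>z\<close> to be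
      orthogonal to \<open>N\<close>, which rules out \<open>z v* A = 0\<close>.\<close>
  define N where "N = {n. n v* A = 0}"
  define S where "S = (\<Union>a\<in>(*v) A ` {x. pos_vec x}. \<Union>n\<in>N. {a + n})"
  have mem: "A *v x + n \<in> S" if "pos_vec x" "n \<in> N" for x n
    using that unfolding S_def by blast
  have "subspace N"
    unfolding N_def by (auto simp: subspace_def vector_matrix_left_distrib scaleR_vector_matrix_assoc)
  then have "convex S"
    unfolding S_def
    by (intro convex_sums convex_linear_image convex_pos_orthant subspace_imp_convex) simp_all
  moreover have "0 \<notin> S"
  proof
    assume "0 \<in> S"
    then obtain x n where "pos_vec x" "n \<in> N" and sum0: "0 = A *v x + n"
      unfolding S_def by blast
    then have "n = 0"
      using left_null_add_range_eq_0[of n A x] by (simp add: N_def)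
    then have "A *v x = 0" by (metis sum0 add_0_right)
    then show False using assms \<open>pos_vec x\<close> by blast
  qed
  ultimately obtain z where "z \<noteq> 0" and z: "\<forall>s\<in>S. 0 \<le> inner z s"
    using separating_hyperplane_set_0 by blast
  have sep: "0 \<le> inner (z v* A) x + inner z n" if "pos_vec x" "n \<in> N" for x n
    using z[rule_format, OF mem[OF that]] by (simp add: inner_add_right dot_lmul_matrix)
  have "0 \<in> N" using \<open>subspace N\<close> by (rule subspace_0)
  have "0 \<le> inner (z v* A) (axis j 1)" for j
    by (rule inner_lower_bound_nonneg_orthant[OF _ axis_nonneg]) (use sep[OF _ \<open>0 \<in> N\<close>] in simp)
  then have "0 \<le> z v* A"
    by (simp add: less_eq_vec_def inner_axis)
  moreover have "z v* A \<noteq> 0"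
  proof
    assume "z v* A = 0"
    then have "- z \<in> N" by (simp add: N_def uminus_vector_matrix_mult)
    then have "0 \<le> - inner z z"
      using sep[of "\<chi> j. 1" "- z"] \<open>z v* A = 0\<close> by (simp add: pos_vec_def)
    moreover have "0 < inner z z" using \<open>z \<noteq> 0\<close> by simp
    ultimately show False by linarith
  qed
  ultimately show ?thesis by blast
qed

lemma principal_S_support_left_nonpos_eq_0:
  fixes M :: "real ^ 'n ^ 'n"
  assumes "principal_S M {i. y $ i \<noteq> 0}" and "0 \<le> y" and "y v* M \<le> 0"
  shows "y = 0"
proof (rule ccontr)
  define I where "I = {i. y $ i \<noteq> 0}"
  assume "y \<noteq> 0"
  then have "I \<noteq> {}" by (auto simp: I_def vec_eq_iff)
  obtain x where x: "\<forall>j\<in>I. x j \<ge> 0" and Mx: "\<forall>i\<in>I. (\<Sum>j\<in>I. M $ i $ j * x j) > 0"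
    using assms(1) unfolding principal_S_def I_def by blast
  have y_pos: "y $ i > 0" if "i \<in> I" for i
    using that \<open>0 \<le> y\<close> by (auto simp: I_def less_eq_vec_def order_le_neq_trans)
  have yM: "(y v* M) $ j = (\<Sum>i\<in>I. y $ i * M $ i $ j)" for j
    unfolding vector_matrix_mult_def by (auto simp: I_def intro: sum.mono_neutral_right)
  have "0 < (\<Sum>i\<in>I. y $ i * (\<Sum>j\<in>I. M $ i $ j * x j))"
    using \<open>I \<noteq> {}\<close> Mx y_pos by (intro sum_pos) auto
  also have "\<dots> = (\<Sum>j\<in>I. x j * (y v* M) $ j)"
    unfolding yM sum_distrib_left by (subst sum.swap) (simp add: mult_ac)
  also have "\<dots> \<le> 0"
    using x \<open>y v* M \<le> 0\<close> by (intro sum_nonpos) (auto simp: less_eq_vec_def mult_nonneg_nonpos)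
  finally show False by simp
qed

lemma left_nonpos_pos_vec:
  fixes M :: "real ^ 'n ^ 'n"
  assumes proper: "\<forall>I. I \<noteq> {} \<and> I \<subset> UNIV \<longrightarrow> principal_S M I"
    and "y \<noteq> 0" and "0 \<le> y" and "y v* M \<le> 0"
  shows "pos_vec y"
  unfolding pos_vec_def
proof
  fix k
  show "y $ k > 0"
  proof (rule ccontr)
    assume "\<not> y $ k > 0"
    moreover have "0 \<le> y $ k"
      using \<open>0 \<le> y\<close> by (simp add: less_eq_vec_def)
    ultimately have "{i. y $ i \<noteq> 0} \<subset> UNIV" by auto
    moreover have "{i. y $ i \<noteq> 0} \<noteq> {}"
      using \<open>y \<noteq> 0\<close> by (auto simp: vec_eq_iff)
    ultimately have "principal_S M {i. y $ i \<noteq> 0}"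
      using proper by simp
    then have "y = 0"
      using \<open>0 \<le> y\<close> \<open>y v* M \<le> 0\<close> by (rule principal_S_support_left_nonpos_eq_0)
    then show False using \<open>y \<noteq> 0\<close> by simp
  qed
qed

lemma exists_scaled_diff_nonneg_with_zero:
  fixes a v :: "real ^ 'n"
  assumes a: "pos_vec a" and "v $ k > 0"
  shows "\<exists>t>0. 0 \<le> a - t *\<^sub>R v \<and> (\<exists>m. (a - t *\<^sub>R v) $ m = 0)"
proof -
  define ratios where "ratios = (\<lambda>i. a $ i / v $ i) ` {i. v $ i > 0}"
  define t where "t = Min ratios"
  have "finite ratios" "ratios \<noteq> {}"
    using \<open>v $ k > 0\<close> by (auto simp: ratios_def)
  then have "t \<in> ratios" unfolding t_def by (rule Min_in)
  then obtain m where "v $ m > 0" and t: "t = a $ m / v $ m"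
    by (auto simp: ratios_def)
  then have "t > 0" using a by (simp add: pos_vec_def)
  have "t * v $ i \<le> a $ i" for i
  proof (cases "v $ i > 0")
    case True
    then have "t \<le> a $ i / v $ i"
      unfolding t_def using \<open>finite ratios\<close> by (intro Min_le) (auto simp: ratios_def)
    then show ?thesis using True by (simp add: field_simps)
  next
    case False
    then have "t * v $ i \<le> 0" using \<open>t > 0\<close> by (simp add: mult_nonneg_nonpos)
    then show ?thesis using a by (smt (verit) pos_vec_def)
  qed
  moreover have "(a - t *\<^sub>R v) $ m = 0" using t \<open>v $ m > 0\<close> by simp
  ultimately show ?thesis
    using \<open>t > 0\<close> by (auto simp: less_eq_vec_def)
qed

lemma pos_left_nonpos_eq_scaled:
  fixes M :: "real ^ 'n ^ 'n"
  assumes proper: "\<forall>I. I \<noteq> {} \<and> I \<subset> UNIV \<longrightarrow> principal_S M I"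
    and "pos_vec b" and "b v* M \<le> 0" and "0 \<le> w v* M" and "w $ k > 0"
  shows "\<exists>t>0. b = t *\<^sub>R w"
proof -
  obtain t m where "t > 0" and nonneg: "0 \<le> b - t *\<^sub>R w" and "(b - t *\<^sub>R w) $ m = 0"
    using exists_scaled_diff_nonneg_with_zero[OF \<open>pos_vec b\<close> \<open>w $ k > 0\<close>] by blast
  then have "\<not> pos_vec (b - t *\<^sub>R w)" unfolding pos_vec_def by (metis less_irrefl)
  moreover have "(b - t *\<^sub>R w) v* M \<le> 0"
    using assms(3,4) \<open>t > 0\<close>
    unfolding less_eq_vec_def
    by (simp add: vector_matrix_mult_diff_distrib scaleR_vector_matrix_assoc)
      (smt (verit) mult_nonneg_nonneg)
  ultimately have "b - t *\<^sub>R w = 0"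
    using left_nonpos_pos_vec[OF proper _ nonneg] by blast
  then show ?thesis using \<open>t > 0\<close> by auto
qed

lemma left_null_vector_multiple:
  fixes M :: "real ^ 'n ^ 'n"
  assumes proper: "\<forall>I. I \<noteq> {} \<and> I \<subset> UNIV \<longrightarrow> principal_S M I"
    and "pos_vec b" and "b v* M \<le> 0" and "x v* M = 0"
  shows "\<exists>c. x = c *\<^sub>R b"
proof (cases "x = 0")
  case True
  then show ?thesis by (intro exI[of _ 0]) simp
next
  case False
  then obtain k where "x $ k \<noteq> 0" by (auto simp: vec_eq_iff)
  then obtain w s where "w $ k > 0" "w v* M = 0" and x: "x = s *\<^sub>R w"
    using \<open>x v* M = 0\<close>
    by (cases "x $ k > 0")
      (auto intro: that[of x 1] that[of "- x" "-1"] simp: uminus_vector_matrix_mult)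
  then have "0 \<le> w v* M" by simp
  then obtain t where "t > 0" "b = t *\<^sub>R w"
    using pos_left_nonpos_eq_scaled[OF proper assms(2,3) _ \<open>w $ k > 0\<close>] by blast
  then show ?thesis
    using x by (intro exI[of _ "s / t"]) simp
qed

lemma rank_eq_if_left_null_space_line:
  fixes A :: "real ^ 'n ^ 'n"
  assumes "y \<noteq> 0" and null: "\<And>x. x v* A = 0 \<longleftrightarrow> (\<exists>c. x = c *\<^sub>R y)"
  shows "rank A = CARD('n) - 1"
proof -
  let ?f = "(*v) (transpose A)"
  have rank: "rank A = dim (range ?f)"
    using rank_dim_range[of "transpose A"] by (simp add: rank_transpose)
  have "?f y = ?f 0"
    using null[of y] by (metis scaleR_one transpose_matrix_vector vector_matrix_mult_0)
  then have "\<not> inj ?f"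
    using \<open>y \<noteq> 0\<close> by (meson injD)
  then have "rank A < CARD('n)"
    using less_rank_noninjective[of "transpose A"] by (simp add: rank_transpose)
  define H where "H = {x. inner y x = 0}"
  have "span H = H"
    by (simp add: H_def subspace_hyperplane)
  have "inj_on ?f (span H)"
  proof (rule inj_onI)
    fix x1 x2 assume "x1 \<in> span H" "x2 \<in> span H" "?f x1 = ?f x2"
    then have "(x1 - x2) v* A = 0"
      by (simp add: vector_matrix_mult_diff_distrib)
    then obtain c where c: "x1 - x2 = c *\<^sub>R y"
      using null by blast
    have "x1 \<in> H" "x2 \<in> H"
      using \<open>x1 \<in> span H\<close> \<open>x2 \<in> span H\<close> by (simp_all only: \<open>span H = H\<close>)
    then have "inner y (x1 - x2) = 0"
      by (simp add: H_def inner_diff_right)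
    then have "c * inner y y = 0"
      by (simp add: c)
    then show "x1 = x2"
      using c \<open>y \<noteq> 0\<close> by simp
  qed
  then have "dim (?f ` H) = dim H"
    by (rule dim_image_eq[OF matrix_vector_mul_linear])
  moreover have "dim H = CARD('n) - 1"
    using dim_hyperplane[OF \<open>y \<noteq> 0\<close>] by (simp add: H_def)
  moreover have "dim (?f ` H) \<le> rank A"
    unfolding rank by (rule dim_subset) auto
  ultimately show ?thesis
    using \<open>rank A < CARD('n)\<close> by linarith
qed

lemma right_null_pos_vec_exists:
  fixes M :: "real ^ 'n ^ 'n"
  assumes proper: "\<forall>I. I \<noteq> {} \<and> I \<subset> UNIV \<longrightarrow> principal_S M I"
    and "pos_vec y" and "y v* M = 0"
  shows "\<exists>U. pos_vec U \<and> M *v U = 0"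
proof (rule ccontr)
  assume "\<nexists>U. pos_vec U \<and> M *v U = 0"
  then obtain z where "0 \<le> z v* M" and "z v* M \<noteq> 0"
    using stiemke_alternative by blast
  show False
  proof (cases "\<exists>k. z $ k > 0")
    case True
    then obtain t where "t > 0" "y = t *\<^sub>R z"
      using pos_left_nonpos_eq_scaled[OF proper \<open>pos_vec y\<close> _ \<open>0 \<le> z v* M\<close>] \<open>y v* M = 0\<close>
      by auto
    then show False
      using \<open>y v* M = 0\<close> \<open>z v* M \<noteq> 0\<close> by (simp add: scaleR_vector_matrix_assoc)
  next
    case False
    then have "0 \<le> - z" by (auto simp: less_eq_vec_def not_less)
    moreover have "(- z) v* M \<le> 0" "- z \<noteq> 0"
      using \<open>0 \<le> z v* M\<close> \<open>z v* M \<noteq> 0\<close> by (auto simp: uminus_vector_matrix_mult less_eq_vec_def)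
    ultimately have "pos_vec (- z)"
      using left_nonpos_pos_vec[OF proper] by blast
    moreover have "y $ k > 0" for k
      using \<open>pos_vec y\<close> by (simp add: pos_vec_def)
    ultimately obtain t where "- z = t *\<^sub>R y"
      using pos_left_nonpos_eq_scaled[OF proper, of "- z" y] \<open>(- z) v* M \<le> 0\<close> \<open>y v* M = 0\<close>
      by auto
    then have "(- z) v* M = 0"
      using \<open>y v* M = 0\<close> by (simp add: scaleR_vector_matrix_assoc)
    then show False
      using \<open>z v* M \<noteq> 0\<close> by (simp add: uminus_vector_matrix_mult)
  qed
qed

theorem lemma2:
  fixes R :: "real ^ 'n ^ 'n"
  assumes "CARD('n) \<ge> 2"
    and "\<forall>i. R $ i $ i = 1"
    and "\<not> S_matrix R"
    and "\<forall>J. J \<noteq> {} \<and> J \<subset> UNIV \<longrightarrow> completely_S_on R J"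
    and "det R = 0"
  shows "rank R = CARD('n) - 1
         \<and> (\<exists>U. pos_vec U \<and> R *v U = 0)
         \<and> (\<exists>a. pos_vec a \<and> a v* R = 0)"
proof -
  have proper: "\<forall>I. I \<noteq> {} \<and> I \<subset> UNIV \<longrightarrow> principal_S R I"
    using assms(4) unfolding completely_S_on_def by blast
  obtain y where "y \<noteq> 0" "0 \<le> y" "y v* R \<le> 0"
    using ville_alternative[of R] assms(3)
    by (auto simp: S_matrix_def nonneg_vec_def less_eq_vec_def)
  then have "pos_vec y"
    using left_nonpos_pos_vec[OF proper] by blast
  have null_multiple: "\<exists>c. x = c *\<^sub>R y" if "x v* R = 0" for x
    using left_null_vector_multiple[OF proper \<open>pos_vec y\<close> \<open>y v* R \<le> 0\<close> that] .
  obtain v where "v \<noteq> 0" "v v* R = 0"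
    using assms(5) matrix_nonfull_linear_equations_eq[of "transpose R"]
    by (auto simp: det_eq_0_rank rank_transpose)
  then have "y v* R = 0"
    using null_multiple by (force simp: scaleR_vector_matrix_assoc)
  then have "rank R = CARD('n) - 1"
    using null_multiple \<open>y \<noteq> 0\<close>
    by (intro rank_eq_if_left_null_space_line) (auto simp: scaleR_vector_matrix_assoc)
  moreover have "\<exists>U. pos_vec U \<and> R *v U = 0"
    using right_null_pos_vec_exists[OF proper \<open>pos_vec y\<close> \<open>y v* R = 0\<close>] .
  ultimately show ?thesis
    using \<open>pos_vec y\<close> \<open>y v* R = 0\<close> by blast
qed

end
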